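(* Let $\theta^*\in\mathbb{R}^n$, let $\phi:\mathbb{R}_{\ge0}\to\mathbb{R}^n$ be piecewise continuous and bounded, and $y^*(t):=\phi^T(t)\theta^*$. Let $t_1,\dots,t_N\ge0$ be such that $\mathcal{D}=[\phi(t_1),\dots,\phi(t_N)]$ has rank $n$. Let $\beta,\gamma,\mu>0$ with $\beta\ge2\gamma/\mu$, $\mathcal{N}_t:=1+\mu\phi^T(t)\phi(t)$, and $$B(\theta,\mu):=\sum_{k=1}^N\frac{\phi(t_k)}{1+\mu\phi^T(t_k)\phi(t_k)}\big(\phi^T(t_k)\theta-y^*(t_k)\big).$$ Then $(\theta^*,\theta^* )$ is uniformly globally asymptotically stable for the system in $(\theta,\vartheta)\in\mathbb{R}^{2n}$ $$\dot\theta=-\beta(\theta-\vartheta)\mathcal{N}_t,\qquad\dot\vartheta=-\gamma\Big(\phi(t)\big(\phi^T(t)\theta-y^*(t)\big)+\mathcal{N}_tB(\theta,\mu)\Big).$$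
   Context: No persistent excitation is assumed. For a system $\dot x=f(x,t)$ with equilibrium $x^*$: uniformly globally stable (UGS) means there is a class-$\mathcal{K}_\infty$ function $\kappa$ with $|x(t)-x^*|\le\kappa(|x_\circ-x^*|)$ for all $t\ge t_\circ$, for every solution from every $(x_\circ,t_\circ)$; uniformly globally attractive (UGA) means for each $r,\sigma>0$ there is $T'>0$ with $|x_\circ-x^*|\le r\Rightarrow|x(t)-x^*|\le\sigma$ for all $t\ge t_\circ+T'$, uniformly in $t_\circ\ge0$; UGAS means UGS and UGA. *)

theory Defs
  imports "HOL-Analysis.Analysis"
begin

definition classK_inf :: "(real \<Rightarrow> real) \<Rightarrow> bool" where
  "classK_inf \<kappa> \<longleftrightarrow> continuous_on {0..} \<kappa> \<and> \<kappa> 0 = 0 \<and>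
     strict_mono_on {0..} \<kappa> \<and> filterlim \<kappa> at_top at_top"

definition piecewise_continuous :: "(real \<Rightarrow> 'a::topological_space) \<Rightarrow> bool" where
  "piecewise_continuous \<phi> \<longleftrightarrow>
     (\<forall>T\<ge>0. \<exists>S. finite S \<and> continuous_on ({0..T} - S) \<phi> \<and>
        (\<forall>s\<in>S. (\<exists>l. (\<phi> \<longlongrightarrow> l) (at_right s)) \<and> (s > 0 \<longrightarrow> (\<exists>l. (\<phi> \<longlongrightarrow> l) (at_left s)))))"

text \<open>(Caratheodory) solution of x' = f(x,t) on [t0,t1] with x(t0) = x0,
  in integral form.\<close>
definition is_solution_on ::
  "('a::euclidean_space \<Rightarrow> real \<Rightarrow> 'a) \<Rightarrow> real \<Rightarrow> real \<Rightarrow> 'a \<Rightarrow> (real \<Rightarrow> 'a) \<Rightarrow> bool" where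
  "is_solution_on f t0 t1 x0 x \<longleftrightarrow> t0 \<le> t1 \<and> x t0 = x0 \<and> continuous_on {t0..t1} x \<and>
     (\<forall>t\<in>{t0..t1}. ((\<lambda>s. f (x s) s) has_integral (x t - x0)) {t0..t})"

definition UGS :: "('a::euclidean_space \<Rightarrow> real \<Rightarrow> 'a) \<Rightarrow> 'a \<Rightarrow> bool" where
  "UGS f xs \<longleftrightarrow> (\<exists>\<kappa>. classK_inf \<kappa> \<and>
     (\<forall>t0 t1 x0 x. t0 \<ge> 0 \<and> is_solution_on f t0 t1 x0 x \<longrightarrow>
        (\<forall>t\<in>{t0..t1}. norm (x t - xs) \<le> \<kappa> (norm (x0 - xs)))))"

definition UGA :: "('a::euclidean_space \<Rightarrow> real \<Rightarrow> 'a) \<Rightarrow> 'a \<Rightarrow> bool" where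
  "UGA f xs \<longleftrightarrow> (\<forall>r>0. \<forall>\<sigma>>0. \<exists>T'>0.
     (\<forall>t0 t1 x0 x. t0 \<ge> 0 \<and> is_solution_on f t0 t1 x0 x \<and> norm (x0 - xs) \<le> r \<longrightarrow>
        (\<forall>t\<in>{t0..t1}. t \<ge> t0 + T' \<longrightarrow> norm (x t - xs) \<le> \<sigma>)))"

definition UGAS :: "('a::euclidean_space \<Rightarrow> real \<Rightarrow> 'a) \<Rightarrow> 'a \<Rightarrow> bool" where
  "UGAS f xs \<longleftrightarrow> UGS f xs \<and> UGA f xs"

end

theory Submission
  imports Defs
begin

text \<open>
  In the error coordinates \<open>e = \<theta> - \<theta>\<^sup>*\<close>, \<open>v = \<vartheta> - \<theta>\<^sup>*\<close> let
  \<open>q(e) = \<Sigma>\<^sub>k (\<phi>(t\<^sub>k)\<bullet>e)\<^sup>2 / N\<^bsub>t\<^sub>k\<^esub>\<close>; its gradient is \<open>2B(\<theta>,\<mu>)\<close>, and it is positive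
  definite because the samples \<open>\<phi>(t\<^sub>k)\<close> span \<open>\<real>\<^sup>n\<close>. Then
  \<open>V = \<gamma> q(e) + \<beta>/2 |v|\<^sup>2 + \<beta>/2 |e - v|\<^sup>2\<close> is a quadratic Lyapunov function whose derivative
  along the vector field is at most \<open>-\<beta>\<gamma> q(e) - \<beta>\<^sup>2|e - v|\<^sup>2\<close> at every time \<open>t\<close>; the
  condition \<open>\<beta> \<ge> 2\<gamma>/\<mu>\<close> is what lets the \<open>\<beta>\<^sup>2\<mu>|\<phi>(t)|\<^sup>2|e - v|\<^sup>2\<close> part of
  the damping absorb the cross term coming from the instantaneous regressor \<open>\<phi>(t)\<close>. Since this
  estimate does not depend on \<open>t\<close> and solutions are differentiable outside the finitely many
  discontinuities of \<open>\<phi>\<close>, \<open>V\<close> decays exponentially along every solution uniformly in the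
  initial time, which gives UGAS with a linear class-\<open>\<K>\<^sub>\<infinity>\<close> bound.
\<close>

lemma classK_inf_linear: "K > 0 \<Longrightarrow> classK_inf (\<lambda>r. K * r)"
  unfolding classK_inf_def
  by (auto simp: strict_mono_on_def intro!: continuous_intros
      filterlim_tendsto_pos_mult_at_top[OF tendsto_const _ filterlim_ident])

lemma UGS_of_exponential_bound:
  fixes f :: "'a::euclidean_space \<Rightarrow> real \<Rightarrow> 'a"
  assumes K: "K > 0" and c: "c > 0"
    and bound: "\<And>t0 t1 x0 x t. t0 \<ge> 0 \<Longrightarrow> is_solution_on f t0 t1 x0 x \<Longrightarrow> t \<in> {t0..t1} \<Longrightarrow>
                  norm (x t - xs)^2 \<le> K * exp (- c * (t - t0)) * norm (x0 - xs)^2"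
  shows "UGS f xs"
  unfolding UGS_def
proof (intro exI[of _ "\<lambda>r. sqrt K * r"] conjI allI impI ballI)
  show "classK_inf (\<lambda>r. sqrt K * r)"
    using K by (simp add: classK_inf_linear)
next
  fix t0 t1 x0 x t
  assume "0 \<le> t0 \<and> is_solution_on f t0 t1 x0 x" and t: "t \<in> {t0..t1}"
  then have "norm (x t - xs)^2 \<le> K * exp (- c * (t - t0)) * norm (x0 - xs)^2"
    using bound by blast
  also have "\<dots> \<le> K * norm (x0 - xs)^2"
    using t c K by (intro mult_right_mono) (auto simp: mult_le_cancel_left1)
  also have "\<dots> = (sqrt K * norm (x0 - xs))^2"
    using K by (simp add: power_mult_distrib)
  finally show "norm (x t - xs) \<le> sqrt K * norm (x0 - xs)"
    by (rule power2_le_imp_le) (use K in simp)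
qed

lemma UGA_of_exponential_bound:
  fixes f :: "'a::euclidean_space \<Rightarrow> real \<Rightarrow> 'a"
  assumes K: "K > 0" and c: "c > 0"
    and bound: "\<And>t0 t1 x0 x t. t0 \<ge> 0 \<Longrightarrow> is_solution_on f t0 t1 x0 x \<Longrightarrow> t \<in> {t0..t1} \<Longrightarrow>
                  norm (x t - xs)^2 \<le> K * exp (- c * (t - t0)) * norm (x0 - xs)^2"
  shows "UGA f xs"
  unfolding UGA_def
proof (intro allI impI)
  fix r \<sigma> :: real assume r: "r > 0" and \<sigma>: "\<sigma> > 0"
  define T where "T = max 1 (ln (K * r^2 / \<sigma>^2) / c)"
  have "ln (K * r^2 / \<sigma>^2) / c \<le> T"
    by (simp add: T_def)
  then have "ln (K * r^2 / \<sigma>^2) \<le> c * T"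
    using c by (simp add: pos_divide_le_eq mult.commute)
  then have "exp (ln (K * r^2 / \<sigma>^2)) \<le> exp (c * T)"
    by simp
  then have "K * r^2 / \<sigma>^2 \<le> exp (c * T)"
    using K r \<sigma> by simp
  then have decayed: "K * exp (- c * T) * r^2 \<le> \<sigma>^2"
    using \<sigma> by (simp add: exp_minus field_simps)
  show "\<exists>T'>0. \<forall>t0 t1 x0 x. t0 \<ge> 0 \<and> is_solution_on f t0 t1 x0 x \<and> norm (x0 - xs) \<le> r \<longrightarrow>
      (\<forall>t\<in>{t0..t1}. t \<ge> t0 + T' \<longrightarrow> norm (x t - xs) \<le> \<sigma>)"
  proof (intro exI[of _ T] conjI allI impI ballI)
    show "T > 0" by (simp add: T_def)
  next
    fix t0 t1 x0 x t
    assume h: "0 \<le> t0 \<and> is_solution_on f t0 t1 x0 x \<and> norm (x0 - xs) \<le> r"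
      and t: "t \<in> {t0..t1}" and tT: "t0 + T \<le> t"
    have "norm (x t - xs)^2 \<le> K * exp (- c * (t - t0)) * norm (x0 - xs)^2"
      using bound h t by blast
    also have "\<dots> \<le> K * exp (- c * T) * norm (x0 - xs)^2"
      using tT c K by (intro mult_right_mono mult_left_mono) auto
    also have "\<dots> \<le> K * exp (- c * T) * r^2"
      using h K by (intro mult_left_mono power_mono) auto
    also have "\<dots> \<le> \<sigma>^2"
      by (rule decayed)
    finally show "norm (x t - xs) \<le> \<sigma>"
      by (rule power2_le_imp_le) (use \<sigma> in simp)
  qed
qed

lemma is_solution_on_has_vector_derivative:
  assumes sol: "is_solution_on f t0 t1 x0 x"
    and s: "s \<in> {t0<..<t1}" and cont: "isCont (\<lambda>r. f (x r) r) s"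
  shows "(x has_vector_derivative f (x s) s) (at s)"
proof -
  let ?g = "\<lambda>r. f (x r) r"
  have x: "\<And>t. t \<in> {t0..t1} \<Longrightarrow> (?g has_integral (x t - x0)) {t0..t}"
    using sol by (simp add: is_solution_on_def)
  have "((\<lambda>u. integral {t0..u} ?g) has_vector_derivative ?g s) (at s within {t0..t1} - {})"
    using x[of t1] s cont
    by (intro integral_has_vector_derivative_continuous_at)
       (auto intro: continuous_at_imp_continuous_within)
  then have "((\<lambda>u. x0 + integral {t0..u} ?g) has_vector_derivative ?g s) (at s)"
    using s by (auto simp: at_within_Icc_at intro!: derivative_eq_intros)
  then show ?thesis
  proof (rule has_vector_derivative_transform_within_open[where S = "{t0<..<t1}"])
    show "x0 + integral {t0..y} ?g = x y" if "y \<in> {t0<..<t1}" for y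
      using x[of y] that by (auto dest: integral_unique)
  qed (use s in auto)
qed

lemma is_solution_on_exponential_decay:
  fixes f :: "'a::euclidean_space \<Rightarrow> real \<Rightarrow> 'a" and V :: "'a \<Rightarrow> real"
  assumes sol: "is_solution_on f t0 t1 x0 x"
    and S: "finite S" and cont: "\<And>s. s \<in> {t0<..<t1} - S \<Longrightarrow> isCont (\<lambda>r. f (x r) r) s"
    and V: "\<And>X. (V has_derivative DV X) (at X)"
    and dissipation: "\<And>X s. DV X (f X s) \<le> - c * V X"
    and t: "t \<in> {t0..t1}"
  shows "V (x t) \<le> exp (- c * (t - t0)) * V x0"
proof -
  \<comment> \<open>\<open>W\<close> is nonincreasing: its derivative \<open>W'\<close> exists and is nonpositive outside \<open>S\<close>.\<close>
  define W where "W s = exp (c * s) * V (x s)" for s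
  define W' where "W' s = exp (c * s) * (c * V (x s) + DV (x s) (f (x s) s))" for s
  have "continuous_on UNIV V"
    using V has_derivative_continuous by (blast intro: continuous_at_imp_continuous_on)
  moreover have "continuous_on {t0..t} x"
    using sol t by (auto simp: is_solution_on_def intro: continuous_on_subset)
  ultimately have "continuous_on {t0..t} (\<lambda>s. V (x s))"
    by (rule continuous_on_compose2) auto
  then have W_cont: "continuous_on {t0..t} W"
    unfolding W_def by (intro continuous_intros)
  have "(W has_vector_derivative W' s) (at s)" if s: "s \<in> {t0<..<t} - S" for s
  proof -
    have "(x has_vector_derivative f (x s) s) (at s)"
      using s t by (intro is_solution_on_has_vector_derivative[OF sol] cont) auto
    from vector_derivative_diff_chain_within[OF this has_derivative_at_withinI[OF V]]
    have V_x: "((\<lambda>r. V (x r)) has_real_derivative DV (x s) (f (x s) s)) (at s)"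
      by (simp add: o_def has_real_derivative_iff_has_vector_derivative)
    have "(W has_real_derivative W' s) (at s)"
      unfolding W_def W'_def by (rule derivative_eq_intros V_x | simp add: algebra_simps)+
    then show ?thesis by (simp add: has_real_derivative_iff_has_vector_derivative)
  qed
  then have "(W' has_integral (W t - W t0)) {t0..t}"
    using t by (intro fundamental_theorem_of_calculus_interior_strong[OF S]) (auto intro: W_cont)
  moreover have "W' s \<le> 0" for s
    using dissipation[of "x s" s] unfolding W'_def by (intro mult_nonneg_nonpos) auto
  ultimately have "W t - W t0 \<le> 0"
    by (rule has_integral_le[OF _ has_integral_0])
  then have "W t \<le> W t0"
    by simp
  have "V (x t) = exp (- (c * t)) * W t"
    by (simp add: W_def exp_minus field_simps)
  also have "\<dots> \<le> exp (- (c * t)) * W t0"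
    using \<open>W t \<le> W t0\<close> by simp
  also have "\<dots> = (exp (- (c * t)) * exp (c * t0)) * V x0"
    using sol by (simp add: W_def is_solution_on_def)
  also have "exp (- (c * t)) * exp (c * t0) = exp (- c * (t - t0))"
    by (simp add: right_diff_distrib flip: exp_add)
  finally show ?thesis .
qed

lemma UGAS_of_quadratic_lyapunov:
  fixes f :: "'a::euclidean_space \<Rightarrow> real \<Rightarrow> 'a" and V :: "'a \<Rightarrow> real"
  assumes a: "a > 0" and b: "b > 0" and c: "c > 0"
    and lower: "\<And>X. a * norm (X - xs)^2 \<le> V X"
    and upper: "\<And>X. V X \<le> b * norm (X - xs)^2"
    and V: "\<And>X. (V has_derivative DV X) (at X)"
    and dissipation: "\<And>X s. DV X (f X s) \<le> - c * norm (X - xs)^2"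
    and piecewise: "\<And>t0 t1 x0 x. t0 \<ge> 0 \<Longrightarrow> is_solution_on f t0 t1 x0 x \<Longrightarrow>
                       \<exists>S. finite S \<and> (\<forall>s\<in>{t0<..<t1} - S. isCont (\<lambda>r. f (x r) r) s)"
  shows "UGAS f xs"
proof -
  have "DV X (f X s) \<le> - (c / b) * V X" for X s
  proof -
    have "(c / b) * V X \<le> c * norm (X - xs)^2"
      using upper[of X] b c by (simp add: field_simps)
    with dissipation[of X s] show ?thesis by simp
  qed
  have bound: "norm (x t - xs)^2 \<le> b / a * exp (- (c / b) * (t - t0)) * norm (x0 - xs)^2"
    if t0: "t0 \<ge> 0" and sol: "is_solution_on f t0 t1 x0 x" and t: "t \<in> {t0..t1}" for t0 t1 x0 x t
  proof -
    have "a * norm (x t - xs)^2 \<le> V (x t)"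
      by (rule lower)
    also have "\<dots> \<le> exp (- (c / b) * (t - t0)) * V x0"
      using piecewise[OF t0 sol] is_solution_on_exponential_decay[OF sol _ _ V _ t]
        \<open>\<And>X s. DV X (f X s) \<le> - (c / b) * V X\<close> by blast
    also have "\<dots> \<le> exp (- (c / b) * (t - t0)) * (b * norm (x0 - xs)^2)"
      by (intro mult_left_mono upper) simp
    finally show ?thesis
      using a by (simp add: field_simps)
  qed
  have "b / a > 0" "c / b > 0"
    using a b c by simp_all
  with bound show ?thesis
    unfolding UGAS_def by (blast intro: UGS_of_exponential_bound UGA_of_exponential_bound)
qed

lemma inner_diff_self_le: "(a - b) \<bullet> (a - b) \<le> 2 * (a \<bullet> a) + 2 * (b \<bullet> b)"
  for a b :: "'a::real_inner"
proof -
  have "0 \<le> (a + b) \<bullet> (a + b)" by simp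
  then show ?thesis by (simp add: inner_simps inner_commute algebra_simps)
qed

definition gram_form :: "('m::finite \<Rightarrow> real) \<Rightarrow> ('m \<Rightarrow> 'a::real_inner) \<Rightarrow> 'a \<Rightarrow> real" where
  "gram_form w p e = (\<Sum>k\<in>UNIV. w k * (p k \<bullet> e)^2)"

definition gram_map :: "('m::finite \<Rightarrow> real) \<Rightarrow> ('m \<Rightarrow> 'a::real_inner) \<Rightarrow> 'a \<Rightarrow> 'a" where
  "gram_map w p e = (\<Sum>k\<in>UNIV. (w k * (p k \<bullet> e)) *\<^sub>R p k)"

lemma inner_gram_map: "h \<bullet> gram_map w p e = (\<Sum>k\<in>UNIV. w k * (p k \<bullet> e) * (p k \<bullet> h))"
  by (simp add: gram_map_def inner_sum_right inner_commute)

lemma inner_gram_map_self: "e \<bullet> gram_map w p e = gram_form w p e"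
  by (simp add: inner_gram_map gram_form_def power2_eq_square mult.assoc)

lemma gram_form_nonneg: "(\<And>k. 0 \<le> w k) \<Longrightarrow> 0 \<le> gram_form w p e"
  by (simp add: gram_form_def sum_nonneg)

lemma gram_form_le: "(\<And>k. 0 \<le> w k) \<Longrightarrow> gram_form w p e \<le> (\<Sum>k\<in>UNIV. w k * (p k \<bullet> p k)) * (e \<bullet> e)"
  unfolding gram_form_def sum_distrib_right mult.assoc
  by (intro sum_mono mult_left_mono Cauchy_Schwarz_ineq)

lemma gram_form_scaleR: "gram_form w p (c *\<^sub>R e) = c^2 * gram_form w p e"
  by (simp add: gram_form_def sum_distrib_left power_mult_distrib algebra_simps)

lemma gram_form_coercive:
  fixes p :: "'m::finite \<Rightarrow> 'a::euclidean_space"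
  assumes spanning: "\<And>e. (\<And>k. p k \<bullet> e = 0) \<Longrightarrow> e = 0" and w: "\<And>k. w k > 0"
  shows "\<exists>l>0. \<forall>e. l * (e \<bullet> e) \<le> gram_form w p e"
proof -
  have pos: "gram_form w p e > 0" if "e \<noteq> 0" for e
  proof -
    obtain k where "p k \<bullet> e \<noteq> 0" using spanning \<open>e \<noteq> 0\<close> by blast
    then have "0 < w k * (p k \<bullet> e)^2" using w by simp
    also have "\<dots> \<le> gram_form w p e"
      unfolding gram_form_def using w by (intro member_le_sum) (auto simp: less_imp_le)
    finally show ?thesis .
  qed
  have "continuous_on (sphere 0 1) (gram_form w p)"
    unfolding gram_form_def by (intro continuous_intros)
  moreover have "sphere (0::'a) 1 \<noteq> {}"
    by simp
  ultimately obtain u where u: "u \<in> sphere 0 1" and min: "\<forall>v\<in>sphere 0 1. gram_form w p u \<le> gram_form w p v"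
    using continuous_attains_inf[OF compact_sphere] by blast
  have "gram_form w p u * (e \<bullet> e) \<le> gram_form w p e" for e
  proof (cases "e = 0")
    case False
    then have "gram_form w p u \<le> gram_form w p ((1 / norm e) *\<^sub>R e)"
      using min by simp
    then have "gram_form w p u * (norm e)^2 \<le> gram_form w p e"
      using False by (simp add: gram_form_scaleR field_simps)
    then show ?thesis by (simp add: power2_norm_eq_inner)
  qed (simp add: gram_form_def)
  moreover have "gram_form w p u > 0" using u by (intro pos) auto
  ultimately show ?thesis by blast
qed

lemma orthogonal_full_rank_columns_eq_0:
  fixes p :: "'m::finite \<Rightarrow> real^'n"
  assumes "rank ((\<chi> i k. p k $ i) :: real^'m^'n) = CARD('n)" and "\<And>k. p k \<bullet> e = 0"
  shows "e = 0"
proof -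
  let ?A = "(\<chi> i k. p k $ i) :: real^'m^'n"
  have "inj ((*v) (transpose ?A))"
    using assms(1) by (simp add: full_rank_injective[symmetric] rank_transpose)
  moreover have "transpose ?A *v e = transpose ?A *v 0"
    using assms(2) by (simp add: vec_eq_iff matrix_vector_mult_def transpose_def inner_vec_def)
  ultimately show "e = 0" by (rule injD)
qed

lemma tuner_dissipation:
  fixes e v p q :: "'a::real_inner"
  assumes "\<mu> > 0" "\<beta> > 0" "\<gamma> > 0" "2 * \<gamma> \<le> \<beta> * \<mu>" "0 \<le> e \<bullet> q"
  defines "N \<equiv> 1 + \<mu> * (p \<bullet> p)"
  defines "de \<equiv> (- \<beta> * N) *\<^sub>R (e - v)" and "dv \<equiv> (- \<gamma>) *\<^sub>R ((p \<bullet> e) *\<^sub>R p + N *\<^sub>R q)"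
  shows "2 * \<gamma> * (de \<bullet> q) + \<beta> * (v \<bullet> dv) + \<beta> * ((e - v) \<bullet> (de - dv))
         \<le> - \<beta> * \<gamma> * (e \<bullet> q) - \<beta>^2 * ((e - v) \<bullet> (e - v))"
proof -
  define z where "z = e - v"
  have "2 * \<gamma> * (de \<bullet> q) + \<beta> * (v \<bullet> dv) + \<beta> * ((e - v) \<bullet> (de - dv))
     = - \<beta> * \<gamma> * (p \<bullet> e)^2 + 2 * \<beta> * \<gamma> * (p \<bullet> e) * (p \<bullet> z) - \<beta> * \<gamma> * N * (e \<bullet> q)
       - \<beta>^2 * N * (z \<bullet> z)"
    unfolding de_def dv_def z_def
    by (simp add: inner_simps inner_commute algebra_simps power2_eq_square)
  also have "\<dots> \<le> - \<beta> * \<gamma> * (e \<bullet> q) - \<beta>^2 * (z \<bullet> z)"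
  proof -
    \<comment> \<open>The cross term is at most \<open>\<beta>\<gamma>(p\<bullet>z)\<^sup>2 \<le> \<beta>\<gamma>|p|\<^sup>2|z|\<^sup>2\<close>, which the part
      \<open>\<beta>\<^sup>2\<mu>|p|\<^sup>2|z|\<^sup>2\<close> of \<open>\<beta>\<^sup>2N|z|\<^sup>2\<close> absorbs since \<open>2\<gamma> \<le> \<beta>\<mu>\<close>.\<close>
    have "- \<beta> * \<gamma> * (p \<bullet> e)^2 + 2 * \<beta> * \<gamma> * (p \<bullet> e) * (p \<bullet> z)
          = \<beta> * \<gamma> * (p \<bullet> z)^2 - \<beta> * \<gamma> * (p \<bullet> e - p \<bullet> z)^2"
      by (simp add: power2_eq_square algebra_simps)
    also have "\<dots> \<le> \<beta> * \<gamma> * (p \<bullet> z)^2"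
      using assms(2,3) by simp
    also have "\<dots> \<le> \<beta> * \<gamma> * ((p \<bullet> p) * (z \<bullet> z))"
      using assms(2,3) by (intro mult_left_mono Cauchy_Schwarz_ineq) auto
    also have "\<dots> \<le> \<beta> * (\<beta> * \<mu>) * ((p \<bullet> p) * (z \<bullet> z))"
      using assms(2,3,4) by (intro mult_right_mono mult_left_mono) auto
    finally have cross: "- \<beta> * \<gamma> * (p \<bullet> e)^2 + 2 * \<beta> * \<gamma> * (p \<bullet> e) * (p \<bullet> z)
                          \<le> \<beta>^2 * (N - 1) * (z \<bullet> z)"
      by (simp add: N_def power2_eq_square algebra_simps)
    have "\<beta> * \<gamma> * (e \<bullet> q) \<le> \<beta> * \<gamma> * N * (e \<bullet> q)"
      using assms(1-3,5) by (simp add: N_def algebra_simps)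
    with cross show ?thesis by (simp add: algebra_simps)
  qed
  finally show ?thesis by (simp add: z_def)
qed

lemma tuner_lyapunov_bounds:
  fixes e v :: "'a::real_inner"
  assumes "0 \<le> q" "q \<le> \<Lambda> * (e \<bullet> e)" "\<beta> > 0" "\<gamma> > 0" "\<Lambda> \<ge> 0"
  shows "\<beta> / 6 * (e \<bullet> e + v \<bullet> v) \<le> \<gamma> * q + \<beta> / 2 * (v \<bullet> v) + \<beta> / 2 * ((e - v) \<bullet> (e - v))"
    and "\<gamma> * q + \<beta> / 2 * (v \<bullet> v) + \<beta> / 2 * ((e - v) \<bullet> (e - v)) \<le> (\<gamma> * \<Lambda> + 3 * \<beta> / 2) * (e \<bullet> e + v \<bullet> v)"
proof -
  define Z where "Z = (e - v) \<bullet> (e - v)"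
  have "e \<bullet> e \<le> 2 * (v \<bullet> v) + 2 * Z"
    using inner_diff_self_le[of v "v - e"] by (simp add: Z_def inner_commute inner_diff)
  then have "\<beta> * (e \<bullet> e) \<le> \<beta> * (2 * (v \<bullet> v) + 2 * Z)"
    using assms(3) by simp
  moreover have "0 \<le> \<gamma> * q" "0 \<le> \<beta> * Z"
    using assms by (simp_all add: Z_def)
  ultimately show "\<beta> / 6 * (e \<bullet> e + v \<bullet> v) \<le> \<gamma> * q + \<beta> / 2 * (v \<bullet> v) + \<beta> / 2 * ((e - v) \<bullet> (e - v))"
    unfolding Z_def[symmetric] by (simp add: algebra_simps)
  have "Z \<le> 2 * (e \<bullet> e) + 2 * (v \<bullet> v)"
    unfolding Z_def by (rule inner_diff_self_le)
  then have "\<beta> * Z \<le> 2 * (\<beta> * (e \<bullet> e)) + 2 * (\<beta> * (v \<bullet> v))"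
    using mult_left_mono[of _ _ \<beta>] assms(3) by (fastforce simp: algebra_simps)
  moreover have "\<gamma> * q \<le> \<gamma> * \<Lambda> * (e \<bullet> e)" "0 \<le> \<gamma> * \<Lambda> * (v \<bullet> v)"
    "0 \<le> \<beta> * (e \<bullet> e)" "0 \<le> \<beta> * (v \<bullet> v)"
    using assms by (simp_all add: mult.assoc)
  moreover have "(\<gamma> * \<Lambda> + 3 * \<beta> / 2) * (e \<bullet> e + v \<bullet> v)
      = \<gamma> * \<Lambda> * (e \<bullet> e) + \<gamma> * \<Lambda> * (v \<bullet> v) + 3 / 2 * (\<beta> * (e \<bullet> e)) + 3 / 2 * (\<beta> * (v \<bullet> v))"
    by (simp add: algebra_simps)
  ultimately show "\<gamma> * q + \<beta> / 2 * (v \<bullet> v) + \<beta> / 2 * ((e - v) \<bullet> (e - v)) \<le> (\<gamma> * \<Lambda> + 3 * \<beta> / 2) * (e \<bullet> e + v \<bullet> v)"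
    unfolding Z_def[symmetric] by simp
qed

lemma tuner_dissipation_coercive:
  fixes e v :: "'a::real_inner"
  assumes "l > 0" "l * (e \<bullet> e) \<le> q" "\<beta> > 0" "\<gamma> > 0"
  shows "- \<beta> * \<gamma> * q - \<beta>^2 * ((e - v) \<bullet> (e - v)) \<le> - (min (\<beta> * \<gamma> * l) (\<beta>^2) / 3) * (e \<bullet> e + v \<bullet> v)"
proof -
  define c where "c = min (\<beta> * \<gamma> * l) (\<beta>^2) / 3"
  define Z where "Z = (e - v) \<bullet> (e - v)"
  have "0 \<le> c" "3 * c \<le> \<beta> * \<gamma> * l" "3 * c \<le> \<beta>^2" "0 \<le> Z"
    using assms by (simp_all add: c_def Z_def)
  have "(3 * c) * (e \<bullet> e) \<le> (\<beta> * \<gamma> * l) * (e \<bullet> e)"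
    using \<open>3 * c \<le> \<beta> * \<gamma> * l\<close> by (rule mult_right_mono) simp
  also have "\<dots> \<le> \<beta> * \<gamma> * q"
    using assms(2-4) mult_left_mono[of "l * (e \<bullet> e)" q "\<beta> * \<gamma>"] by (simp add: mult.assoc)
  finally have "(3 * c) * (e \<bullet> e) \<le> \<beta> * \<gamma> * q" .
  moreover have "(2 * c) * Z \<le> \<beta>^2 * Z"
    using \<open>0 \<le> c\<close> \<open>3 * c \<le> \<beta>^2\<close> \<open>0 \<le> Z\<close> by (intro mult_right_mono) auto
  moreover have "c * (v \<bullet> v) \<le> c * (2 * (e \<bullet> e) + 2 * Z)"
    using inner_diff_self_le[of e "e - v"] \<open>0 \<le> c\<close> by (intro mult_left_mono) (simp_all add: Z_def)
  ultimately show ?thesis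
    unfolding c_def[symmetric] Z_def[symmetric] by (simp add: algebra_simps)
qed

locale high_order_tuner =
  fixes \<theta>s :: "real^'n" and \<phi> :: "real \<Rightarrow> real^'n" and tk :: "'m::finite \<Rightarrow> real"
    and \<beta> \<gamma> \<mu> :: real
  assumes \<phi>_piecewise_continuous: "piecewise_continuous \<phi>"
    and samples_full_rank: "rank ((\<chi> i k. \<phi> (tk k) $ i) :: real^'m^'n) = CARD('n)"
    and pos: "\<beta> > 0" "\<gamma> > 0" "\<mu> > 0"
    and \<beta>_ge: "\<beta> \<ge> 2 * \<gamma> / \<mu>"
begin

definition normalizer :: "real \<Rightarrow> real" where
  "normalizer t = 1 + \<mu> * (\<phi> t \<bullet> \<phi> t)"

definition sample :: "'m \<Rightarrow> real^'n" where
  "sample k = \<phi> (tk k)"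

definition weight :: "'m \<Rightarrow> real" where
  "weight k = 1 / normalizer (tk k)"

text \<open>\<open>gram_map weight sample (\<theta> - \<theta>s)\<close> is the paper's \<open>B(\<theta>,\<mu>)\<close>, because
  \<open>\<phi>(t\<^sub>k)\<^sup>T\<theta> - y\<^sup>*(t\<^sub>k) = \<phi>(t\<^sub>k) \<bullet> (\<theta> - \<theta>s)\<close>.\<close>

definition vector_field :: "(real^'n) \<times> (real^'n) \<Rightarrow> real \<Rightarrow> (real^'n) \<times> (real^'n)" where
  "vector_field X t =
     ((- \<beta> * normalizer t) *\<^sub>R (fst X - snd X),
      (- \<gamma>) *\<^sub>R ((\<phi> t \<bullet> (fst X - \<theta>s)) *\<^sub>R \<phi> t + normalizer t *\<^sub>R gram_map weight sample (fst X - \<theta>s)))"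

definition lyapunov :: "(real^'n) \<times> (real^'n) \<Rightarrow> real" where
  "lyapunov X = \<gamma> * gram_form weight sample (fst X - \<theta>s) + \<beta> / 2 * ((snd X - \<theta>s) \<bullet> (snd X - \<theta>s))
     + \<beta> / 2 * ((fst X - snd X) \<bullet> (fst X - snd X))"

definition lyapunov_derivative :: "(real^'n) \<times> (real^'n) \<Rightarrow> (real^'n) \<times> (real^'n) \<Rightarrow> real" where
  "lyapunov_derivative X h = 2 * \<gamma> * (fst h \<bullet> gram_map weight sample (fst X - \<theta>s))
     + \<beta> * ((snd X - \<theta>s) \<bullet> snd h) + \<beta> * ((fst X - snd X) \<bullet> (fst h - snd h))"

lemma weight_pos: "0 < weight k"
  using pos by (simp add: weight_def normalizer_def add_pos_nonneg)

lemma norm_error_sq: "norm (X - (\<theta>s, \<theta>s))^2 = (fst X - \<theta>s) \<bullet> (fst X - \<theta>s) + (snd X - \<theta>s) \<bullet> (snd X - \<theta>s)"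
  by (cases X) (simp add: norm_Pair power2_norm_eq_inner)

lemma has_derivative_lyapunov: "(lyapunov has_derivative lyapunov_derivative X) (at X)"
  unfolding lyapunov_def lyapunov_derivative_def gram_form_def
  by (rule has_derivative_eq_rhs, (rule derivative_eq_intros refl)+)
     (simp add: fun_eq_iff inner_gram_map sum_distrib_left inner_simps inner_commute algebra_simps)

lemma lyapunov_bounds:
  defines "\<Lambda> \<equiv> (\<Sum>k\<in>UNIV. weight k * (sample k \<bullet> sample k))"
  shows "\<beta> / 6 * norm (X - (\<theta>s, \<theta>s))^2 \<le> lyapunov X"
    and "lyapunov X \<le> (\<gamma> * \<Lambda> + 3 * \<beta> / 2) * norm (X - (\<theta>s, \<theta>s))^2"
proof -
  have "0 \<le> weight k" for k
    using weight_pos by (rule less_imp_le)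
  then have "0 \<le> \<Lambda>" "0 \<le> gram_form weight sample e" "gram_form weight sample e \<le> \<Lambda> * (e \<bullet> e)" for e
    unfolding \<Lambda>_def by (simp_all add: sum_nonneg gram_form_nonneg gram_form_le)
  note bounds = tuner_lyapunov_bounds[OF this(2) this(3) pos(1,2) this(1),
      where e = "fst X - \<theta>s" and v = "snd X - \<theta>s"]
  have "lyapunov X = \<gamma> * gram_form weight sample (fst X - \<theta>s) + \<beta> / 2 * ((snd X - \<theta>s) \<bullet> (snd X - \<theta>s))
     + \<beta> / 2 * (((fst X - \<theta>s) - (snd X - \<theta>s)) \<bullet> ((fst X - \<theta>s) - (snd X - \<theta>s)))"
    by (simp add: lyapunov_def)
  with bounds show "\<beta> / 6 * norm (X - (\<theta>s, \<theta>s))^2 \<le> lyapunov X"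
    and "lyapunov X \<le> (\<gamma> * \<Lambda> + 3 * \<beta> / 2) * norm (X - (\<theta>s, \<theta>s))^2"
    by (simp_all only: norm_error_sq)
qed

lemma lyapunov_derivative_vector_field_le:
  obtains c where "c > 0" and "\<And>X t. lyapunov_derivative X (vector_field X t) \<le> - c * norm (X - (\<theta>s, \<theta>s))^2"
proof -
  have spanning: "e = 0" if "\<And>k. sample k \<bullet> e = 0" for e
    by (rule orthogonal_full_rank_columns_eq_0[of sample, OF _ that]) (simp add: sample_def samples_full_rank)
  obtain l where l: "l > 0" "\<And>e. l * (e \<bullet> e) \<le> gram_form weight sample e"
    using gram_form_coercive[of sample weight, OF spanning weight_pos] by auto
  have bg: "2 * \<gamma> \<le> \<beta> * \<mu>"
    using \<beta>_ge pos by (simp add: pos_divide_le_eq mult.commute)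
  have "lyapunov_derivative X (vector_field X t) \<le> - (min (\<beta> * \<gamma> * l) (\<beta>^2) / 3) * norm (X - (\<theta>s, \<theta>s))^2"
    for X t
  proof -
    define e where "e = fst X - \<theta>s"
    define v where "v = snd X - \<theta>s"
    have "0 \<le> e \<bullet> gram_map weight sample e"
      using weight_pos by (simp add: inner_gram_map_self gram_form_nonneg less_imp_le)
    note dissipation = tuner_dissipation[OF pos(3,1,2) bg this, of "\<phi> t" v]
    have "fst X - snd X = e - v"
      by (simp add: e_def v_def)
    then have "lyapunov_derivative X (vector_field X t)
        \<le> - \<beta> * \<gamma> * gram_form weight sample e - \<beta>^2 * ((e - v) \<bullet> (e - v))"
      using dissipation
      by (simp add: lyapunov_derivative_def vector_field_def normalizer_def inner_gram_map_self
          flip: e_def v_def)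
    also have "\<dots> \<le> - (min (\<beta> * \<gamma> * l) (\<beta>^2) / 3) * (e \<bullet> e + v \<bullet> v)"
      using l pos by (intro tuner_dissipation_coercive) auto
    finally show ?thesis
      by (simp add: norm_error_sq e_def v_def)
  qed
  moreover have "min (\<beta> * \<gamma> * l) (\<beta>^2) / 3 > 0"
    using l pos by simp
  ultimately show thesis
    using that by blast
qed

lemma isCont_vector_field_along:
  assumes "isCont \<phi> s" and "isCont x s"
  shows "isCont (\<lambda>r. vector_field (x r) r) s"
  unfolding vector_field_def normalizer_def gram_map_def by (intro continuous_intros assms)

lemma vector_field_piecewise_continuous_along_solution:
  assumes "t0 \<ge> 0" and sol: "is_solution_on vector_field t0 t1 x0 x"
  shows "\<exists>S. finite S \<and> (\<forall>s\<in>{t0<..<t1} - S. isCont (\<lambda>r. vector_field (x r) r) s)"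
proof -
  have "t1 \<ge> 0"
    using assms by (simp add: is_solution_on_def)
  then obtain S where S: "finite S" "continuous_on ({0..t1} - S) \<phi>"
    using \<phi>_piecewise_continuous unfolding piecewise_continuous_def by blast
  have U: "open ({t0<..<t1} - S)"
    using S(1) by (intro open_Diff finite_imp_closed) auto
  have "continuous_on ({t0<..<t1} - S) \<phi>"
    by (rule continuous_on_subset[OF S(2)]) (use \<open>t0 \<ge> 0\<close> in auto)
  moreover have "continuous_on {t0..t1} x"
    using sol by (simp add: is_solution_on_def)
  then have "continuous_on ({t0<..<t1} - S) x"
    by (rule continuous_on_subset) auto
  ultimately have "isCont \<phi> s" "isCont x s" if "s \<in> {t0<..<t1} - S" for s
    using U that by (simp_all add: continuous_on_eq_continuous_at)
  then show ?thesis
    using S(1) isCont_vector_field_along by blast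
qed

theorem UGAS_vector_field: "UGAS vector_field (\<theta>s, \<theta>s)"
proof -
  obtain c where c: "c > 0"
    and dissipation: "\<And>X t. lyapunov_derivative X (vector_field X t) \<le> - c * norm (X - (\<theta>s, \<theta>s))^2"
    using lyapunov_derivative_vector_field_le by blast
  have "\<beta> / 6 > 0"
    using pos by simp
  moreover have "0 < \<gamma> * (\<Sum>k\<in>UNIV. weight k * (sample k \<bullet> sample k)) + 3 * \<beta> / 2"
    using pos weight_pos by (intro add_nonneg_pos) (simp_all add: sum_nonneg less_imp_le)
  ultimately show ?thesis
    by (rule UGAS_of_quadratic_lyapunov[OF _ _ c lyapunov_bounds has_derivative_lyapunov dissipation
          vector_field_piecewise_continuous_along_solution])
qed

end

theorem theorem3:
  fixes \<theta>s :: "real^'n"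
    and \<phi> :: "real \<Rightarrow> real^'n"
    and tk :: "'m::finite \<Rightarrow> real"
    and \<beta> \<gamma> \<mu> :: real
  assumes pc: "piecewise_continuous \<phi>"
    and bdd: "\<exists>M. \<forall>t\<ge>0. norm (\<phi> t) \<le> M"
    and tk_nonneg: "\<forall>k. tk k \<ge> 0"
    and rank: "rank ((\<chi> i k. \<phi> (tk k) $ i) :: real^'m^'n) = CARD('n)"
    and pos: "\<beta> > 0" "\<gamma> > 0" "\<mu> > 0"
    and beta_ge: "\<beta> \<ge> 2 * \<gamma> / \<mu>"
  shows "UGAS
     (\<lambda>(th, vth) t.
        let ys = (\<lambda>s. \<phi> s \<bullet> \<theta>s);
            Nt = 1 + \<mu> * (\<phi> t \<bullet> \<phi> t);
            B = (\<Sum>k\<in>UNIV. (1 / (1 + \<mu> * (\<phi> (tk k) \<bullet> \<phi> (tk k)))) *\<^sub>R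
                   ((\<phi> (tk k) \<bullet> th - ys (tk k)) *\<^sub>R \<phi> (tk k)))
        in ((- \<beta> * Nt) *\<^sub>R (th - vth),
            (- \<gamma>) *\<^sub>R ((\<phi> t \<bullet> th - ys t) *\<^sub>R \<phi> t + Nt *\<^sub>R B)))
     (\<theta>s, \<theta>s)"
    (is "UGAS ?f _")
proof -
  interpret high_order_tuner \<theta>s \<phi> tk \<beta> \<gamma> \<mu>
    using pc rank pos beta_ge by unfold_locales
  have "?f = vector_field"
    by (intro ext) (simp add: case_prod_unfold Let_def vector_field_def normalizer_def gram_map_def
        weight_def sample_def inner_diff_right)
  with UGAS_vector_field show ?thesis by simp
qed

end
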